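(* Let $N\ge 2$ and let $\mathbf{g}\in\mathbb{C}^N$ be a window such that, for $\ell=0$ and $\ell=1$, the DFT of the sequence $n\mapsto\mathbf{g}[n]\overline{\mathbf{g}[(n-\ell)\bmod N]}$ is non-vanishing. Then for every non-vanishing $\mathbf{x}\in\mathbb{C}^N$ (i.e. $\mathbf{x}[n]\neq0$ for all $n$), the algebraic algorithm described in the context, applied to $|\mathbf{X}[m,k]|^2$ (the STFT magnitude of $\mathbf{x}$ with $L=1$), outputs $e^{i\phi}\mathbf{x}$ for some $\phi\in\mathbb{R}$.
   Context: Signals and windows are indexed by $\{0,\dots,N-1\}$ and extended $N$-periodically (indices mod $N$). The STFT of $\mathbf{x}\in\mathbb{C}^N$ with window $\mathbf{g}$ and step $L=1$ is $\mathbf{X}[m,k]=\sum_{n=0}^{N-1}\mathbf{x}[n]\mathbf{g}[m-n]e^{-2\pi i kn/N}$, $m,k=0,\dots,N-1$. The DFT of $\mathbf{v}\in\mathbb{C}^N$ is $(\mathbf{F}\mathbf{v})[k]=\sum_n\mathbf{v}[n]e^{-2\pi i kn/N}$. Algebraic algorithm: given $\mathbf{Y}[m,k]=|\mathbf{X}[m,k]|^2$, (1) compute $\mathbf{Z}[m,\ell]=\sum_{k=0}^{N-1}\mathbf{Y}[m,k]e^{-2\pi i k\ell/N}$ and $\mathbf{z}_\ell=(\mathbf{Z}[m,\ell])_{m=0}^{N-1}$; (2) for $\ell=0,1$ compute $\mathbf{x}_\ell=\frac1N\mathbf{G}_\ell^{-1}\mathbf{z}_\ell$, where $\mathbf{G}_\ell$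 is the $N\times N$ circulant matrix with first column $(\mathbf{g}[m]\overline{\mathbf{g}[(m-\ell)\bmod N]})_{m=0}^{N-1}$ (inverted via its DFT diagonalization), and set $\hat{\mathbf{x}}[0]=\sqrt{\mathbf{x}_0[0]}$; (3) recursively for $n=0,\dots,N-2$ set $\hat{\mathbf{x}}[n+1]$ by $\overline{\hat{\mathbf{x}}[n+1]}=\mathbf{x}_1[n]/\hat{\mathbf{x}}[n]$; output $\hat{\mathbf{x}}$. *)

theory Defs
  imports Complex_Main
begin

text \<open>Signals/windows in C^N are functions nat => complex; only the values at
indices 0..N-1 are used, and indices are reduced mod N (periodic extension).\<close>

definition idx :: "nat \<Rightarrow> int \<Rightarrow> nat" where
  "idx N i = nat (i mod int N)"

definition dft :: "nat \<Rightarrow> (nat \<Rightarrow> complex) \<Rightarrow> nat \<Rightarrow> complex" where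
  "dft N v k = (\<Sum>n<N. v n * cis (- 2 * pi * real k * real n / real N))"

definition idft :: "nat \<Rightarrow> (nat \<Rightarrow> complex) \<Rightarrow> nat \<Rightarrow> complex" where
  "idft N w n = (1 / of_nat N) * (\<Sum>k<N. w k * cis (2 * pi * real k * real n / real N))"

text \<open>STFT with step L = 1.\<close>
definition stft :: "nat \<Rightarrow> (nat \<Rightarrow> complex) \<Rightarrow> (nat \<Rightarrow> complex) \<Rightarrow> nat \<Rightarrow> nat \<Rightarrow> complex" where
  "stft N g x m k =
     (\<Sum>n<N. x n * g (idx N (int m - int n)) * cis (- 2 * pi * real k * real n / real N))"

text \<open>First column of the circulant matrix G_l: m |-> g[m] * conj(g[(m-l) mod N]).\<close>
definition win_prod :: "nat \<Rightarrow> (nat \<Rightarrow> complex) \<Rightarrow> nat \<Rightarrow> nat \<Rightarrow> complex" where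
  "win_prod N g l m = g m * cnj (g (idx N (int m - int l)))"

text \<open>Circulant matrix with first column c applied to v, and its inverse via DFT
diagonalization: G^{-1} z = IDFT (DFT z / DFT c).\<close>
definition circulant_mult :: "nat \<Rightarrow> (nat \<Rightarrow> complex) \<Rightarrow> (nat \<Rightarrow> complex) \<Rightarrow> nat \<Rightarrow> complex" where
  "circulant_mult N c v m = (\<Sum>j<N. c (idx N (int m - int j)) * v j)"

definition circulant_inv :: "nat \<Rightarrow> (nat \<Rightarrow> complex) \<Rightarrow> (nat \<Rightarrow> complex) \<Rightarrow> nat \<Rightarrow> complex" where
  "circulant_inv N c z = idft N (\<lambda>k. dft N z k / dft N c k)"

definition zvec :: "nat \<Rightarrow> (nat \<Rightarrow> nat \<Rightarrow> complex) \<Rightarrow> nat \<Rightarrow> nat \<Rightarrow> complex" where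
  "zvec N Y l m = (\<Sum>k<N. Y m k * cis (- 2 * pi * real k * real l / real N))"

definition xvec :: "nat \<Rightarrow> (nat \<Rightarrow> complex) \<Rightarrow> (nat \<Rightarrow> nat \<Rightarrow> complex) \<Rightarrow> nat \<Rightarrow> nat \<Rightarrow> complex" where
  "xvec N g Y l n = (1 / of_nat N) * circulant_inv N (win_prod N g l) (zvec N Y l) n"

primrec recon :: "(nat \<Rightarrow> complex) \<Rightarrow> (nat \<Rightarrow> complex) \<Rightarrow> nat \<Rightarrow> complex" where
  "recon x0 x1 0 = csqrt (x0 0)"
| "recon x0 x1 (Suc n) = cnj (x1 n / recon x0 x1 n)"

definition algebraic_alg :: "nat \<Rightarrow> (nat \<Rightarrow> complex) \<Rightarrow> (nat \<Rightarrow> nat \<Rightarrow> complex) \<Rightarrow> nat \<Rightarrow> complex" where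
  "algebraic_alg N g Y = recon (xvec N g Y 0) (xvec N g Y 1)"

end

theory Submission imports Defs begin

text \<open>
With step L = 1 the DFT along frequencies of the squared STFT magnitudes at time m is, by
Wiener--Khinchin, N times the circular autocorrelation at lag l of the windowed signal
n \<mapsto> x[n] g[m-n]. As a function of m this is the circulant matrix G_l applied to the
lag-l product sequence x[n] conj(x[n+l]), so inverting G_l (possible since its eigenvalues,
the DFT of its first column, do not vanish) recovers x_0[n] = |x[n]|^2 and
x_1[n] = x[n] conj(x[n+1]). The recursion then reproduces x up to the phase of x[0],
since csqrt |x[0]|^2 = |x[0]|.
\<close>

definition unit_root :: "nat \<Rightarrow> int \<Rightarrow> complex" where
  "unit_root N j = cis (2 * pi * of_int j / real N)"

lemma unit_root_add: "unit_root N (a + b) = unit_root N a * unit_root N b"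
  unfolding unit_root_def by (simp add: cis_mult add_divide_distrib distrib_left)

lemma unit_root_0 [simp]: "unit_root N 0 = 1"
  by (simp add: unit_root_def)

lemma unit_root_multiple:
  assumes "N > 0"
  shows "unit_root N (int N * t) = 1"
proof -
  have "2 * pi * of_int (int N * t) / real N = 2 * pi * of_int t" using assms by simp
  thus ?thesis unfolding unit_root_def by simp
qed

lemma unit_root_cnj: "cnj (unit_root N a) = unit_root N (- a)"
  unfolding unit_root_def by (simp add: cis_cnj)

lemma unit_root_power: "unit_root N (int k * j) = unit_root N j ^ k"
  by (induction k) (simp_all add: distrib_right unit_root_add)

lemma unit_root_cong:
  assumes "N > 0" "a mod int N = b mod int N"
  shows "unit_root N a = unit_root N b"
proof -
  have "unit_root N x = unit_root N (x mod int N)" for x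
    using unit_root_add[of N "x mod int N" "int N * (x div int N)"] unit_root_multiple[OF assms(1)]
    by simp
  thus ?thesis using assms(2) by metis
qed

lemma unit_root_eq_1_imp_dvd:
  assumes "N > 0" "unit_root N j = 1"
  shows "int N dvd j"
proof -
  have "cos (2 * pi * of_int j / real N) = 1"
    using assms(2) unfolding unit_root_def by (simp add: complex_eq_iff)
  then obtain t :: int where "2 * pi * of_int j / real N = of_int t * 2 * pi"
    by (auto simp: cos_one_2pi_int)
  hence "real_of_int j = real_of_int (int N * t)" using assms(1) by (simp add: field_simps)
  hence "j = int N * t" by linarith
  thus ?thesis by simp
qed

lemma sum_unit_root_power:
  assumes "N > 0"
  shows "(\<Sum>k<N. unit_root N (int k * j)) = (if int N dvd j then of_nat N else 0)"
proof (cases "int N dvd j")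
  case True
  then obtain t where "j = int N * t" by blast
  hence "unit_root N (int k * j) = 1" for k
    using unit_root_multiple[OF assms, of "int k * t"] by (simp add: algebra_simps)
  thus ?thesis using True by simp
next
  case False
  hence "unit_root N j \<noteq> 1" using unit_root_eq_1_imp_dvd[OF assms] by blast
  moreover have "unit_root N j ^ N = 1"
    using unit_root_multiple[OF assms, of j] unit_root_power[of N N j] by simp
  ultimately show ?thesis using False by (simp add: unit_root_power sum_gp_strict)
qed

lemma cis_eq_unit_root:
  "cis (- 2 * pi * real k * real n / real N) = unit_root N (- (int k * int n))"
  "cis (2 * pi * real k * real n / real N) = unit_root N (int k * int n)"
  unfolding unit_root_def by (simp_all add: mult.assoc)

lemma idx_less: "N > 0 \<Longrightarrow> idx N i < N"
  unfolding idx_def by (simp add: nat_less_iff)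

lemma int_idx: "N > 0 \<Longrightarrow> int (idx N i) = i mod int N"
  unfolding idx_def by simp

lemma idx_of_nat: "n < N \<Longrightarrow> idx N (int n) = n"
  unfolding idx_def by simp

lemma idx_idx_diff:
  "N > 0 \<Longrightarrow> idx N (int (idx N (int m - int j)) - int l) = idx N (int m - int (idx N (int j + int l)))"
  unfolding idx_def by (simp add: mod_diff_left_eq mod_diff_right_eq algebra_simps)

lemma unit_root_idx: "N > 0 \<Longrightarrow> unit_root N (c * int (idx N i)) = unit_root N (c * i)"
  by (rule unit_root_cong) (simp_all add: int_idx mod_mult_right_eq)

lemma dvd_diff_iff_idx:
  assumes "N > 0" "n < N"
  shows "int N dvd (int n - i) \<longleftrightarrow> n = idx N i"
proof -
  have "int N dvd (int n - i) \<longleftrightarrow> int n mod int N = i mod int N"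
    by (simp add: mod_eq_dvd_iff)
  also have "\<dots> \<longleftrightarrow> int n = int (idx N i)" using assms by (simp add: int_idx)
  finally show ?thesis by simp
qed

lemma sum_idx_shift:
  assumes "N > 0"
  shows "(\<Sum>m<N. f (idx N (int m - j))) = (\<Sum>m<N. f m)"
proof -
  let ?h = "\<lambda>m. idx N (int m - j)"
  have inj: "inj_on ?h {..<N}"
  proof (rule inj_onI)
    fix a b assume ab: "a \<in> {..<N}" "b \<in> {..<N}" "?h a = ?h b"
    hence "(int a - j) mod int N = (int b - j) mod int N" using int_idx[OF assms] by metis
    hence "(int a - j + j) mod int N = (int b - j + j) mod int N" by (rule mod_add_cong) simp
    thus "a = b" using ab by simp
  qed
  have "?h ` {..<N} = {..<N}"
    using idx_less[OF assms] by (intro endo_inj_surj[OF _ _ inj]) auto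
  thus ?thesis using sum.reindex[OF inj, of f] by simp
qed

lemma sum_mult_dvd_indicator:
  fixes f :: "nat \<Rightarrow> complex"
  assumes "N > 0"
  shows "(\<Sum>n<N. f n * (if int N dvd (int n - i) then of_nat N else 0)) = of_nat N * f (idx N i)"
proof -
  have "(\<Sum>n<N. f n * (if int N dvd (int n - i) then of_nat N else 0))
      = (\<Sum>n<N. if n = idx N i then of_nat N * f n else 0)"
    by (rule sum.cong) (auto simp: dvd_diff_iff_idx[OF assms] mult.commute)
  also have "\<dots> = of_nat N * f (idx N i)" using idx_less[OF assms] by simp
  finally show ?thesis .
qed

lemma dft_unit_root: "dft N v k = (\<Sum>n<N. v n * unit_root N (- (int k * int n)))"
  unfolding dft_def cis_eq_unit_root ..

lemma dft_cmult: "dft N (\<lambda>m. a * v m) k = a * dft N v k"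
  unfolding dft_def sum_distrib_left by (simp add: mult.assoc)

lemma idft_dft:
  assumes "n < N"
  shows "idft N (dft N v) n = v n"
proof -
  have N: "N > 0" using assms by simp
  have "(\<Sum>k<N. dft N v k * cis (2 * pi * real k * real n / real N))
      = (\<Sum>k<N. \<Sum>j<N. v j * unit_root N (int k * (int n - int j)))"
    unfolding dft_unit_root cis_eq_unit_root sum_distrib_right
    by (intro sum.cong refl) (simp add: mult.assoc unit_root_add[symmetric] algebra_simps)
  also have "\<dots> = (\<Sum>j<N. v j * (\<Sum>k<N. unit_root N (int k * (int n - int j))))"
    by (subst sum.swap) (simp add: sum_distrib_left)
  also have "\<dots> = (\<Sum>j<N. v j * (if int N dvd (int j - int n) then of_nat N else 0))"
    by (intro sum.cong refl) (simp add: sum_unit_root_power[OF N] dvd_diff_commute)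
  also have "\<dots> = of_nat N * v n"
    by (simp add: sum_mult_dvd_indicator[OF N] idx_of_nat assms)
  finally show ?thesis unfolding idft_def using N by simp
qed

lemma dft_circulant_mult:
  assumes "N > 0"
  shows "dft N (circulant_mult N c v) k = dft N c k * dft N v k"
proof -
  have shift: "unit_root N (- (int k * int m))
      = unit_root N (- (int k * int j)) * unit_root N (- (int k * int (idx N (int m - int j))))" for m j
  proof -
    have "unit_root N (- (int k * int (idx N (int m - int j)))) = unit_root N (- int k * (int m - int j))"
      using unit_root_idx[OF assms, of "- int k"] by (simp only: minus_mult_left)
    thus ?thesis by (simp add: unit_root_add[symmetric] algebra_simps)
  qed
  have "dft N (circulant_mult N c v) k
      = (\<Sum>j<N. v j * unit_root N (- (int k * int j)) *
          (\<Sum>m<N. c (idx N (int m - int j)) * unit_root N (- (int k * int (idx N (int m - int j))))))"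
    unfolding dft_unit_root circulant_mult_def sum_distrib_right sum_distrib_left
    apply (subst sum.swap)
    apply (intro sum.cong refl)
    subgoal for j m by (subst shift[of m j]) (simp only: mult_ac)
    done
  also have "\<dots> = (\<Sum>j<N. v j * unit_root N (- (int k * int j)) * dft N c k)"
    by (simp only: sum_idx_shift[OF assms, of "\<lambda>m. c m * unit_root N (- (int k * int m))"]
        dft_unit_root)
  also have "\<dots> = dft N c k * dft N v k"
    unfolding dft_unit_root[of N v] sum_distrib_left by (simp only: mult_ac)
  finally show ?thesis .
qed

lemma circulant_inv_circulant_mult:
  assumes "\<forall>k<N. dft N c k \<noteq> 0" "n < N"
  shows "circulant_inv N c (circulant_mult N c v) n = v n"
proof -
  have "circulant_inv N c (circulant_mult N c v) n = idft N (dft N v) n"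
    unfolding circulant_inv_def idft_def using assms by (simp add: dft_circulant_mult)
  thus ?thesis using idft_dft[OF assms(2)] by simp
qed

text \<open>Wiener--Khinchin, with the sign convention of step (1): the autocorrelation appears at lag -l.\<close>

lemma dft_power_spectrum:
  assumes "N > 0"
  shows "(\<Sum>k<N. complex_of_real ((cmod (dft N a k))\<^sup>2) * unit_root N (- (int k * int l)))
       = of_nat N * (\<Sum>n<N. a n * cnj (a (idx N (int n + int l))))"
proof -
  have power: "complex_of_real ((cmod (dft N a k))\<^sup>2)
      = (\<Sum>n<N. \<Sum>n'<N. a n * cnj (a n') * unit_root N (int k * (int n' - int n)))" for k
    unfolding complex_norm_square dft_unit_root cnj_sum sum_product
    by (intro sum.cong refl)
      (simp add: unit_root_cnj unit_root_add[symmetric] algebra_simps)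
  have "(\<Sum>k<N. complex_of_real ((cmod (dft N a k))\<^sup>2) * unit_root N (- (int k * int l)))
      = (\<Sum>k<N. \<Sum>n<N. \<Sum>n'<N. a n * cnj (a n') * unit_root N (int k * (int n' - (int n + int l))))"
    unfolding power sum_distrib_right
    by (intro sum.cong refl) (simp add: mult.assoc unit_root_add[symmetric] algebra_simps)
  also have "\<dots> = (\<Sum>n<N. \<Sum>n'<N. \<Sum>k<N. a n * cnj (a n') * unit_root N (int k * (int n' - (int n + int l))))"
    by (subst sum.swap) (rule sum.cong[OF refl], rule sum.swap)
  also have "\<dots> = (\<Sum>n<N. a n * (\<Sum>n'<N. cnj (a n') *
                     (if int N dvd (int n' - (int n + int l)) then of_nat N else 0)))"
    by (simp add: sum_distrib_left[symmetric] sum_unit_root_power[OF assms] mult.assoc)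
  also have "\<dots> = of_nat N * (\<Sum>n<N. a n * cnj (a (idx N (int n + int l))))"
    by (simp add: sum_mult_dvd_indicator[OF assms] sum_distrib_left mult_ac)
  finally show ?thesis .
qed

lemma zvec_stft_magnitude:
  assumes "N > 0"
  shows "zvec N (\<lambda>m k. complex_of_real ((cmod (stft N g x m k))\<^sup>2)) l m
       = of_nat N * circulant_mult N (win_prod N g l) (\<lambda>n. x n * cnj (x (idx N (int n + int l)))) m"
proof -
  define a where "a n = x n * g (idx N (int m - int n))" for n
  have "stft N g x m = dft N a"
    unfolding stft_def dft_def a_def by blast
  hence "zvec N (\<lambda>m k. complex_of_real ((cmod (stft N g x m k))\<^sup>2)) l m
      = of_nat N * (\<Sum>n<N. a n * cnj (a (idx N (int n + int l))))"
    using dft_power_spectrum[OF assms, of a l]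
    unfolding zvec_def cis_eq_unit_root by simp
  also have "\<dots> = of_nat N * circulant_mult N (win_prod N g l) (\<lambda>n. x n * cnj (x (idx N (int n + int l)))) m"
    unfolding circulant_mult_def win_prod_def a_def
    by (simp add: idx_idx_diff[OF assms] mult_ac)
  finally show ?thesis .
qed

lemma xvec_stft_magnitude:
  assumes "\<forall>k<N. dft N (win_prod N g l) k \<noteq> 0" "n < N"
  shows "xvec N g (\<lambda>m k. complex_of_real ((cmod (stft N g x m k))\<^sup>2)) l n
       = x n * cnj (x (idx N (int n + int l)))"
proof -
  have N: "N > 0" using assms(2) by simp
  let ?G = "circulant_mult N (win_prod N g l) (\<lambda>n. x n * cnj (x (idx N (int n + int l))))"
  have "zvec N (\<lambda>m k. complex_of_real ((cmod (stft N g x m k))\<^sup>2)) l = (\<lambda>m. of_nat N * ?G m)"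
    using zvec_stft_magnitude[OF N] by blast
  moreover have "circulant_inv N (win_prod N g l) (\<lambda>m. of_nat N * ?G m) n
      = of_nat N * circulant_inv N (win_prod N g l) ?G n"
    unfolding circulant_inv_def idft_def by (simp add: dft_cmult sum_distrib_left mult_ac)
  ultimately show ?thesis
    using N circulant_inv_circulant_mult[OF assms] by (simp add: xvec_def)
qed

lemma recon_eq_phase_shift:
  fixes x x0 x1 :: "nat \<Rightarrow> complex"
  assumes nonzero: "\<forall>n<N. x n \<noteq> 0"
    and x0: "x0 0 = x 0 * cnj (x 0)"
    and x1: "\<forall>n. Suc n < N \<longrightarrow> x1 n = x n * cnj (x (Suc n))"
  shows "n < N \<Longrightarrow> recon x0 x1 n = cis (- Arg (x 0)) * x n"
proof (induction n)
  case 0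
  have "recon x0 x1 0 = complex_of_real (cmod (x 0))"
    using x0 by (simp add: complex_norm_square[symmetric] of_real_sqrt[symmetric])
  also have "\<dots> = cis (- Arg (x 0)) * (cis (Arg (x 0)) * complex_of_real (cmod (x 0)))"
    by (simp add: cis_mult flip: mult.assoc)
  also have "cis (Arg (x 0)) * complex_of_real (cmod (x 0)) = x 0"
    using rcis_cmod_Arg[of "x 0"] by (simp add: rcis_def mult.commute)
  finally show ?case .
next
  case (Suc n)
  have "x n \<noteq> 0" using nonzero Suc.prems by simp
  hence "recon x0 x1 (Suc n) = cnj (cnj (x (Suc n)) / cis (- Arg (x 0)))"
    using Suc x1 by simp
  also have "\<dots> = cis (- Arg (x 0)) * x (Suc n)"
    by (simp add: cis_cnj cis_divide[symmetric] field_simps cis_mult)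
  finally show ?case .
qed

theorem theorem2:
  fixes N :: nat and g x :: "nat \<Rightarrow> complex"
  assumes "N \<ge> 2"
    and "\<forall>l\<in>{0, 1}. \<forall>k<N. dft N (win_prod N g l) k \<noteq> 0"
    and "\<forall>n<N. x n \<noteq> 0"
  shows "\<exists>\<phi>::real. \<forall>n<N.
           algebraic_alg N g (\<lambda>m k. complex_of_real ((cmod (stft N g x m k))\<^sup>2)) n
             = cis \<phi> * x n"
proof -
  define Y where "Y = (\<lambda>m k. complex_of_real ((cmod (stft N g x m k))\<^sup>2))"
  have "xvec N g Y 0 0 = x 0 * cnj (x 0)"
    using xvec_stft_magnitude[of N g 0 0 x] assms(1,2) by (simp add: Y_def idx_def)
  moreover have "\<forall>n. Suc n < N \<longrightarrow> xvec N g Y 1 n = x n * cnj (x (Suc n))"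
  proof (intro allI impI)
    fix n assume "Suc n < N"
    moreover have "idx N (int n + int 1) = Suc n"
      using idx_of_nat[OF \<open>Suc n < N\<close>] by (simp add: add.commute)
    ultimately show "xvec N g Y 1 n = x n * cnj (x (Suc n))"
      using xvec_stft_magnitude[of N g 1 n x] assms(2) by (simp add: Y_def)
  qed
  ultimately have "\<forall>n<N. algebraic_alg N g Y n = cis (- Arg (x 0)) * x n"
    using recon_eq_phase_shift[OF assms(3)] by (simp add: algebraic_alg_def)
  thus ?thesis unfolding Y_def by blast
qed

end
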